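(* Fix $i$ with $0\le i\le\rho(m)-1$. Define the sequence $(v^{\alpha_i}(n))_{n\ge0}$ by $v^{\alpha_i}(j)=x^{\alpha_i}(j+1)$ for $0\le j\le k-2$, $v^{\alpha_i}(k-1)=1-x^{\alpha_i}(k)$, and $v^{\alpha_i}(n)=\mathbf 1\big[\sum_{j=1}^k\bar a_j v^{\alpha_i}(n-j)-\bar\theta\big]$ for $n\ge k$. Then for every $t\ge k$: (a) $v^{\alpha_i}(t)=0$; (b) $\sum_{j=1}^k\bar a_j v^{\alpha_i}(t-j)\le\bar\theta-2$; and (c) the sequence $v^{\alpha_i}$ has transient length $k-p_i$ and cycle length $1$ (it is eventually the constant sequence $0$).
   Context: For $u\in\mathbb{R}$ let $\mathbf 1[u]=1$ if $u\ge 0$ and $\mathbf 1[u]=0$ if $u<0$. For a $\{0,1\}$-valued sequence $(s(n))_{n\ge0}$ that is eventually periodic, its transient length is the least $T\ge0$ such that there is $P\ge1$ with $s(n+P)=s(n)$ for all $n\ge T$, and its cycle length is the least such $P$ (for that $T$). Let $m$ be a positive integer and let $\rho(m)$ denote the number of primes $p$ with $2m<p<3m$; assume $\rho(m)\ge 2$. List these primes as $p_0>p_1>\dots>p_{\rho(m)-1}$ and put $\alpha_i=3m-p_i$. Let $k=(6m-1)\rho(m)$, $\mu_i=\lfloor k/p_i\rfloor$, $\beta_i=k-p_i\mu_i$. Define weights $\bar a_j$, $1\le j\le k$: if $\rho(m)$ is even, $\bar a_j=2$ if $j=\ell p_i$ for some $i$ and some $\ell$ with $1\le \ell\le 3\rho(m)/2$,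 $\bar a_j=-2$ if $j=\ell p_i$ with $3\rho(m)/2<\ell\le 2\rho(m)$, and $\bar a_j=0$ otherwise; if $\rho(m)$ is odd, $\bar a_j=2$ if $j=\ell p_i$ with $1\le\ell\le (3\rho(m)-1)/2$, $\bar a_j=-2$ if $j=\ell p_i$ with $(3\rho(m)+1)/2\le \ell\le 2\rho(m)-2$, $\bar a_j=-1$ if $j=\ell p_i$ with $\ell\in\{2\rho(m)-1,2\rho(m)\}$, and $\bar a_j=0$ otherwise (well defined since the sets $\{\ell p_i:1\le\ell\le2\rho(m)\}$ are pairwise disjoint). Let $\bar\theta=2\rho(m)$. For each $i$ define $x^{\alpha_i}(t)$ for $0\le t\le k-1$ by $x^{\alpha_i}(t)=1$ if $t=\beta_i+\ell p_i$ for some $0\le \ell\le\mu_i-1$ and $x^{\alpha_i}(t)=0$ otherwise, and for $t\ge k$ by $x^{\alpha_i}(t)=\mathbf 1\big[\sum_{j=1}^k \bar a_j x^{\alpha_i}(t-j)-\bar\theta\big]$. *)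

theory Defs
  imports "HOL-Computational_Algebra.Primes"
begin

definition step1 :: "int \<Rightarrow> int" where
  "step1 u = (if u \<ge> 0 then 1 else 0)"

function thr_seq :: "nat \<Rightarrow> (nat \<Rightarrow> int) \<Rightarrow> int \<Rightarrow> (nat \<Rightarrow> int) \<Rightarrow> nat \<Rightarrow> int" where
  "thr_seq k a \<theta> init t =
     (if t < k then init t
      else step1 ((\<Sum>j\<in>{1..k}. a j * thr_seq k a \<theta> init (t - j)) - \<theta>))"
  by pat_completeness auto
termination
  by (relation "measure (\<lambda>(k, a, \<theta>, init, t). t)") auto

definition prime_set :: "nat \<Rightarrow> nat set" where
  "prime_set m = {p. prime p \<and> 2 * m < p \<and> p < 3 * m}"

definition rho :: "nat \<Rightarrow> nat" where
  "rho m = card (prime_set m)"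

definition pr :: "nat \<Rightarrow> nat \<Rightarrow> nat" where
  "pr m i = rev (sorted_list_of_set (prime_set m)) ! i"

definition alpha :: "nat \<Rightarrow> nat \<Rightarrow> nat" where
  "alpha m i = 3 * m - pr m i"

definition kk :: "nat \<Rightarrow> nat" where
  "kk m = (6 * m - 1) * rho m"

definition mu :: "nat \<Rightarrow> nat \<Rightarrow> nat" where
  "mu m i = kk m div pr m i"

definition beta :: "nat \<Rightarrow> nat \<Rightarrow> nat" where
  "beta m i = kk m - pr m i * mu m i"

text \<open>Weight attached to multiple index l (1 <= l <= 2 rho).\<close>
definition wl :: "nat \<Rightarrow> nat \<Rightarrow> int" where
  "wl m l =
     (if even (rho m) then
        (if 2 * l \<le> 3 * rho m then 2 else -2)
      else
        (if 2 * l \<le> 3 * rho m - 1 then 2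
         else if l \<le> 2 * rho m - 2 then -2
         else -1))"

definition abar :: "nat \<Rightarrow> nat \<Rightarrow> int" where
  "abar m j =
     (if \<exists>i l. i < rho m \<and> 1 \<le> l \<and> l \<le> 2 * rho m \<and> j = l * pr m i
      then wl m (THE l. \<exists>i. i < rho m \<and> 1 \<le> l \<and> l \<le> 2 * rho m \<and> j = l * pr m i)
      else 0)"

definition theta_bar :: "nat \<Rightarrow> int" where
  "theta_bar m = 2 * int (rho m)"

definition x_init :: "nat \<Rightarrow> nat \<Rightarrow> nat \<Rightarrow> int" where
  "x_init m i t = (if \<exists>l. l < mu m i \<and> t = beta m i + l * pr m i then 1 else 0)"

definition xseq :: "nat \<Rightarrow> nat \<Rightarrow> nat \<Rightarrow> int" where
  "xseq m i = thr_seq (kk m) (abar m) (theta_bar m) (x_init m i)"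

definition v_init :: "nat \<Rightarrow> nat \<Rightarrow> nat \<Rightarrow> int" where
  "v_init m i j = (if j + 2 \<le> kk m then xseq m i (j + 1) else 1 - xseq m i (kk m))"

definition vseq :: "nat \<Rightarrow> nat \<Rightarrow> nat \<Rightarrow> int" where
  "vseq m i = thr_seq (kk m) (abar m) (theta_bar m) (v_init m i)"

definition periodic_from :: "(nat \<Rightarrow> 'a) \<Rightarrow> nat \<Rightarrow> nat \<Rightarrow> bool" where
  "periodic_from s T P \<longleftrightarrow> P \<ge> 1 \<and> (\<forall>n\<ge>T. s (n + P) = s n)"

definition eventually_periodic :: "(nat \<Rightarrow> 'a) \<Rightarrow> bool" where
  "eventually_periodic s \<longleftrightarrow> (\<exists>T P. periodic_from s T P)"

definition transient_length :: "(nat \<Rightarrow> 'a) \<Rightarrow> nat" where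
  "transient_length s = (LEAST T. \<exists>P. periodic_from s T P)"

definition cycle_length :: "(nat \<Rightarrow> 'a) \<Rightarrow> nat" where
  "cycle_length s = (LEAST P. periodic_from s (transient_length s) P)"

end

theory Submission
  imports Defs "HOL-Number_Theory.Cong"
begin

(* Write p = p_i and k = kk m.  Below k the sequence x^{alpha_i} is the
   indicator of the residue class of k modulo p, so the window sum defining x(k) sees
   exactly the weights at the multiples l*p (1 <= l <= 2 rho); they add up to theta,
   hence x(k) = 1 and v(k-1) = 0.  For t >= k we show v(t) = 0 by strong induction:
   if v vanishes on [k,t), then the lags j in the window with v(t-j) = 1 are those with
   j > d and j = d (mod p), where d = t+1-k.  If p divides d these lags are the
   multiples l*p with l > d/p, whose weights form a proper tail of the weight sequence
   and sum to at most theta - 2.  Otherwise the lags avoid the multiples of p, and every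
   other prime p' has at most one weighted multiple l*p' (l <= 2 rho < p) in a single
   residue class mod p, so the sum is at most 2(rho - 1) = theta - 2.  Finally v is 1
   at k-p-1 and 0 from k-p on, so transient and cycle length follow from a general fact
   about eventually constant sequences. *)

section \<open>Threshold recursions and eventually constant sequences\<close>

lemma thr_seq_below: "t < k \<Longrightarrow> thr_seq k a \<theta> init t = init t"
  by (subst thr_seq.simps) simp

lemma thr_seq_above:
  "k \<le> t \<Longrightarrow> thr_seq k a \<theta> init t = step1 ((\<Sum>j\<in>{1..k}. a j * thr_seq k a \<theta> init (t - j)) - \<theta>)"
  by (subst thr_seq.simps) simp

lemma periodic_from_iterate:
  assumes "periodic_from s T P" and "T \<le> n"
  shows "s (n + a * P) = s n"
proof (induction a)
  case 0
  show ?case by simp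
next
  case (Suc a)
  have "s (n + Suc a * P) = s ((n + a * P) + P)" by (simp add: ac_simps)
  also have "\<dots> = s (n + a * P)" using assms unfolding periodic_from_def by simp
  finally show ?case using Suc.IH by simp
qed

text \<open>A sequence that is constant from \<open>T > 0\<close> on, but takes a different value at
  \<open>T - 1\<close>, has transient length \<open>T\<close> and cycle length 1: an earlier period, iterated
  from \<open>T - 1\<close> into the constant tail, would carry the value at \<open>T - 1\<close> there.\<close>
lemma constant_tail_lengths:
  fixes s :: "nat \<Rightarrow> 'a"
  assumes const: "\<And>n. T \<le> n \<Longrightarrow> s n = c" and T: "0 < T" and jump: "s (T - 1) \<noteq> c"
  shows "eventually_periodic s \<and> transient_length s = T \<and> cycle_length s = 1"
proof -
  have per: "periodic_from s T 1" unfolding periodic_from_def using const by simp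
  have no_earlier: "\<not> periodic_from s T' P" if "T' < T" for T' P
  proof
    assume h: "periodic_from s T' P"
    then have "1 \<le> P" unfolding periodic_from_def by simp
    then have "T * 1 \<le> T * P" by (rule mult_le_mono2)
    then have "T \<le> (T - 1) + T * P" by linarith
    then have "s ((T - 1) + T * P) = c" by (rule const)
    moreover have "s ((T - 1) + T * P) = s (T - 1)"
      by (rule periodic_from_iterate[OF h]) (use that in simp)
    ultimately show False using jump by simp
  qed
  have transient: "transient_length s = T"
    unfolding transient_length_def
  proof (rule Least_equality)
    show "\<exists>P. periodic_from s T P" using per by blast
  next
    fix T' assume "\<exists>P. periodic_from s T' P"
    then show "T \<le> T'" using no_earlier by (meson not_le)
  qed
  have "cycle_length s = 1"
    unfolding cycle_length_def transient
    by (rule Least_equality) (use per in \<open>auto simp: periodic_from_def\<close>)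
  then show ?thesis using per transient unfolding eventually_periodic_def by blast
qed


section \<open>The primes \<open>p_i\<close> and the support of the weights\<close>

lemma prime_set_finite: "finite (prime_set m)"
  unfolding prime_set_def by (rule finite_subset[of _ "{..<3 * m}"]) auto

text \<open>There are at most \<open>m - 1\<close> integers strictly between \<open>2m\<close> and \<open>3m\<close>.\<close>
lemma rho_le: "rho m \<le> m - 1"
proof -
  have "prime_set m \<subseteq> {2 * m<..<3 * m}" unfolding prime_set_def by auto
  then have "rho m \<le> card {2 * m<..<3 * m}" unfolding rho_def by (intro card_mono) auto
  then show ?thesis by simp
qed

lemma pr_in_prime_set: "i < rho m \<Longrightarrow> pr m i \<in> prime_set m"
  unfolding pr_def rho_def using prime_set_finite[of m]
  by (metis length_rev length_sorted_list_of_set nth_mem set_rev set_sorted_list_of_set)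

lemma pr_inj: "i < rho m \<Longrightarrow> i' < rho m \<Longrightarrow> pr m i = pr m i' \<Longrightarrow> i = i'"
  unfolding pr_def rho_def using prime_set_finite[of m]
  by (metis distinct_rev distinct_sorted_list_of_set length_rev length_sorted_list_of_set
      nth_eq_iff_index_eq)

lemma pr_props:
  assumes "i < rho m"
  shows "prime (pr m i)" "2 * m < pr m i" "pr m i < 3 * m"
  using pr_in_prime_set[OF assms] unfolding prime_set_def by auto

text \<open>Every multiplier \<open>l \<le> 2 rho\<close> is smaller than every prime \<open>p_i\<close>; this is what keeps
  the weighted multiples of different primes apart.\<close>
lemma two_rho_lt_pr: assumes "i < rho m" shows "2 * rho m < pr m i"
proof -
  have "m > 0" using rho_le[of m] assms by auto
  then show ?thesis using rho_le[of m] pr_props(2)[OF assms] by linarith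
qed

lemma multiple_index_unique:
  assumes "i < rho m" "i' < rho m" "1 \<le> l'" "l' \<le> 2 * rho m" "pr m i dvd l' * pr m i'"
  shows "i = i'"
proof -
  have p: "prime (pr m i)" "prime (pr m i')" using pr_props assms by auto
  have "\<not> pr m i dvd l'" using two_rho_lt_pr[OF assms(1)] assms(3,4) by (auto dest: dvd_imp_le)
  then have "pr m i dvd pr m i'" using assms(5) p(1) prime_dvd_mult_iff by blast
  then have "pr m i = pr m i'" using p primes_dvd_imp_eq by blast
  then show ?thesis using pr_inj assms by blast
qed

lemma abar_at:
  assumes "i < rho m" "1 \<le> l" "l \<le> 2 * rho m"
  shows "abar m (l * pr m i) = wl m l"
proof -
  have "(THE l'. \<exists>i'. i' < rho m \<and> 1 \<le> l' \<and> l' \<le> 2 * rho m \<and> l * pr m i = l' * pr m i') = l"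
  proof (rule the_equality)
    show "\<exists>i'. i' < rho m \<and> 1 \<le> l \<and> l \<le> 2 * rho m \<and> l * pr m i = l * pr m i'"
      using assms by auto
  next
    fix l' assume "\<exists>i'. i' < rho m \<and> 1 \<le> l' \<and> l' \<le> 2 * rho m \<and> l * pr m i = l' * pr m i'"
    then obtain i' where h: "i' < rho m" "1 \<le> l'" "l' \<le> 2 * rho m" "l * pr m i = l' * pr m i'"
      by blast
    have "pr m i dvd l' * pr m i'" using h(4) by (metis dvd_triv_right)
    then have "i = i'" using multiple_index_unique assms h by blast
    moreover have "pr m i > 0" using pr_props(2)[OF assms(1)] by simp
    ultimately show "l' = l" using h(4) by simp
  qed
  then show ?thesis using assms unfolding abar_def by auto
qed

lemma abar_support:
  "abar m j \<noteq> 0 \<Longrightarrow> \<exists>i l. i < rho m \<and> 1 \<le> l \<and> l \<le> 2 * rho m \<and> j = l * pr m i"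
  unfolding abar_def by (auto split: if_splits)

lemma abar_le: "abar m j \<le> 2"
  unfolding abar_def wl_def by auto

lemma abar_support_dvd:
  assumes "i < rho m" "abar m j \<noteq> 0" "pr m i dvd j"
  shows "\<exists>l. 1 \<le> l \<and> l \<le> 2 * rho m \<and> j = l * pr m i"
proof -
  obtain i' l where h: "i' < rho m" "1 \<le> l" "l \<le> 2 * rho m" "j = l * pr m i'"
    using abar_support[OF assms(2)] by blast
  have "i = i'" using multiple_index_unique[OF assms(1) h(1-3)] assms(3) h(4) by simp
  then show ?thesis using h by blast
qed

text \<open>Two weighted multiples of a prime \<open>p_i' \<noteq> p_i\<close> that are congruent modulo \<open>p_i\<close>
  coincide: cancel the unit \<open>p_i'\<close> and use \<open>l \<le> 2 rho < p_i\<close>.\<close>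
lemma multiples_congruent_eq:
  assumes "i < rho m" "i' < rho m" "i' \<noteq> i" "l1 \<le> 2 * rho m" "l2 \<le> 2 * rho m"
    and cong: "[l1 * pr m i' = l2 * pr m i'] (mod pr m i)"
  shows "l1 = l2"
proof -
  have "pr m i' \<noteq> pr m i" using pr_inj assms(1-3) by blast
  then have "coprime (pr m i') (pr m i)" using pr_props(1) assms(1,2) by (simp add: primes_coprime)
  then have "[l1 = l2] (mod pr m i)" using cong cong_mult_rcancel_nat by blast
  moreover have "l1 < pr m i" "l2 < pr m i" using two_rho_lt_pr[OF assms(1)] assms(4,5) by linarith+
  ultimately show ?thesis by (rule cong_less_modulus_unique_nat)
qed

text \<open>Total weight of a residue class modulo \<open>p_i\<close> avoiding the multiples of \<open>p_i\<close>:
  only the other \<open>rho - 1\<close> primes contribute, each with at most one weight \<open>\<le> 2\<close>.\<close>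
lemma abar_sum_class_bound:
  assumes i: "i < rho m" and fin: "finite J"
    and cls: "\<And>j. j \<in> J \<Longrightarrow> [j = r] (mod pr m i)" and r: "\<not> pr m i dvd r"
  shows "(\<Sum>j\<in>J. abar m j) \<le> 2 * int (rho m) - 2"
proof -
  define J' where "J' = {j\<in>J. abar m j \<noteq> 0}"
  define A where "A i' = {j\<in>J'. \<exists>l\<le>2 * rho m. j = l * pr m i'}" for i'
  have fin': "finite J'" using fin unfolding J'_def by simp
  have cover: "J' \<subseteq> (\<Union>i'\<in>{..<rho m} - {i}. A i')"
  proof
    fix j assume j: "j \<in> J'"
    then obtain i' l where h: "i' < rho m" "1 \<le> l" "l \<le> 2 * rho m" "j = l * pr m i'"
      using abar_support unfolding J'_def by blast
    have "i' \<noteq> i"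
    proof
      assume "i' = i"
      then show False using cls[of j] j h(4) r by (auto simp: cong_def J'_def dvd_eq_mod_eq_0)
    qed
    then show "j \<in> (\<Union>i'\<in>{..<rho m} - {i}. A i')" using h j unfolding A_def by blast
  qed
  have card_A: "card (A i') \<le> 1" if i': "i' \<in> {..<rho m} - {i}" for i'
  proof -
    have "a = b" if ab: "a \<in> A i'" "b \<in> A i'" for a b
    proof -
      obtain l1 l2 where l: "l1 \<le> 2 * rho m" "a = l1 * pr m i'" "l2 \<le> 2 * rho m" "b = l2 * pr m i'"
        using ab unfolding A_def by blast
      have "a \<in> J" "b \<in> J" using ab unfolding A_def J'_def by auto
      then have "[a = b] (mod pr m i)" using cls cong_sym cong_trans by metis
      then show "a = b" using multiples_congruent_eq[OF i _ _ l(1,3)] i' l(2,4) by auto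
    qed
    moreover have "finite (A i')" using fin' unfolding A_def by simp
    ultimately show ?thesis by (simp add: card_le_Suc0_iff_eq)
  qed
  have "card J' \<le> card (\<Union>i'\<in>{..<rho m} - {i}. A i')"
    by (rule card_mono[OF _ cover]) (auto simp: A_def fin')
  also have "\<dots> \<le> (\<Sum>i'\<in>{..<rho m} - {i}. card (A i'))" by (rule card_UN_le) simp
  also have "\<dots> \<le> (\<Sum>i'\<in>{..<rho m} - {i}. 1)" by (rule sum_mono) (rule card_A)
  also have "\<dots> = rho m - 1" using i by simp
  finally have card: "card J' \<le> rho m - 1" .
  have "(\<Sum>j\<in>J. abar m j) = (\<Sum>j\<in>J'. abar m j)"
    by (rule sum.mono_neutral_right[OF fin]) (auto simp: J'_def)
  also have "\<dots> \<le> (\<Sum>j\<in>J'. 2)" by (rule sum_mono) (rule abar_le)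
  also have "\<dots> = 2 * int (card J')" by simp
  also have "\<dots> \<le> 2 * int (rho m) - 2" using card i by linarith
  finally show ?thesis .
qed

section \<open>Partial sums of the weight profile\<close>

text \<open>The profile \<open>wl m l\<close> (\<open>1 \<le> l \<le> 2 rho\<close>) is \<open>2\<close> up to \<open>plus_end m\<close>, then \<open>-2\<close> up to
  \<open>minus_end m\<close>, and (for odd \<open>rho\<close>) \<open>-1\<close> at the last two places.\<close>
definition plus_end :: "nat \<Rightarrow> nat" where
  "plus_end m = (if even (rho m) then 3 * rho m div 2 else (3 * rho m - 1) div 2)"

definition minus_end :: "nat \<Rightarrow> nat" where
  "minus_end m = (if even (rho m) then 2 * rho m else 2 * rho m - 2)"

lemma wl_plus: "l \<le> plus_end m \<Longrightarrow> wl m l = 2"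
  unfolding wl_def plus_end_def by (cases "even (rho m)") (auto elim!: evenE oddE)

lemma wl_nonpos: "plus_end m < l \<Longrightarrow> wl m l \<le> 0"
  unfolding wl_def plus_end_def by (auto split: if_splits elim!: evenE oddE)

lemma wl_minus: "plus_end m < l \<Longrightarrow> l \<le> minus_end m \<Longrightarrow> wl m l = -2"
  unfolding wl_def plus_end_def minus_end_def by (auto split: if_splits elim!: evenE oddE)

lemma wl_last: "odd (rho m) \<Longrightarrow> 2 \<le> rho m \<Longrightarrow> l = 2 * rho m - 1 \<or> l = 2 * rho m \<Longrightarrow> wl m l = -1"
  unfolding wl_def by (auto split: if_splits elim!: evenE oddE)

lemma plus_end_le_minus_end: "2 \<le> rho m \<Longrightarrow> plus_end m \<le> minus_end m"
  unfolding plus_end_def minus_end_def by (auto elim!: evenE oddE)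

lemma wl_sum_plus: "n \<le> plus_end m \<Longrightarrow> (\<Sum>l\<in>{1..n}. wl m l) = 2 * int n"
  by (induction n) (auto simp: wl_plus)

lemma wl_sum_minus:
  "plus_end m + d \<le> minus_end m \<Longrightarrow>
     (\<Sum>l\<in>{1..plus_end m + d}. wl m l) = 2 * int (plus_end m) - 2 * int d"
proof (induction d)
  case 0
  then show ?case using wl_sum_plus[of "plus_end m" m] by simp
next
  case (Suc d)
  have "wl m (plus_end m + Suc d) = -2" using Suc.prems by (intro wl_minus) auto
  then show ?case using Suc by simp
qed

lemma wl_sum_total:
  assumes "2 \<le> rho m"
  shows "(\<Sum>l\<in>{1..2 * rho m}. wl m l) = 2 * int (rho m)"
proof -
  have le: "plus_end m \<le> minus_end m" using plus_end_le_minus_end[OF assms] .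
  have upto_minus_end: "(\<Sum>l\<in>{1..minus_end m}. wl m l)
      = 2 * int (plus_end m) - 2 * int (minus_end m - plus_end m)"
    using wl_sum_minus[of m "minus_end m - plus_end m"] le by simp
  show ?thesis
  proof (cases "even (rho m)")
    case True
    then have "minus_end m = 2 * rho m" by (simp add: minus_end_def)
    then show ?thesis using True upto_minus_end le unfolding plus_end_def by (auto elim!: evenE)
  next
    case False
    then have e: "2 * rho m = Suc (Suc (minus_end m))" using assms by (simp add: minus_end_def)
    have "(\<Sum>l\<in>{1..2 * rho m}. wl m l)
        = (\<Sum>l\<in>{1..minus_end m}. wl m l) + wl m (minus_end m + 1) + wl m (minus_end m + 2)"
      by (simp add: e)
    also have "wl m (minus_end m + 1) = -1" using False assms e by (auto intro: wl_last)
    also have "wl m (minus_end m + 2) = -1" using False assms e by (auto intro: wl_last)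
    finally show ?thesis
      using False upto_minus_end le assms unfolding plus_end_def minus_end_def by (auto elim!: oddE)
  qed
qed

text \<open>Every proper tail of the profile sums to at most \<open>theta - 2\<close>: either the omitted
  head consists of weights \<open>2\<close>, or the tail consists of non-positive weights.\<close>
lemma wl_tail_bound:
  assumes "2 \<le> rho m" "1 \<le> q"
  shows "(\<Sum>l\<in>{q+1..2 * rho m}. wl m l) \<le> 2 * int (rho m) - 2"
proof (cases "q \<le> 2 * rho m")
  case False
  then show ?thesis using assms by simp
next
  case True
  have split: "(\<Sum>l\<in>{1..2 * rho m}. wl m l) = (\<Sum>l\<in>{1..q}. wl m l) + (\<Sum>l\<in>{q+1..2 * rho m}. wl m l)"
    using sum.ub_add_nat[of 1 q "wl m" "2 * rho m - q"] True assms by simp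
  show ?thesis
  proof (cases "q \<le> plus_end m")
    case True
    then show ?thesis using split wl_sum_total[OF assms(1)] wl_sum_plus[OF True] assms by simp
  next
    case False
    have "(\<Sum>l\<in>{q+1..2 * rho m}. wl m l) \<le> (\<Sum>l\<in>{q+1..2 * rho m}. 0)"
      using False by (intro sum_mono wl_nonpos) auto
    then show ?thesis using assms by simp
  qed
qed

section \<open>The sequences \<open>x\<close> and \<open>v\<close> for a fixed prime \<open>p_i\<close>\<close>

context
  fixes m i :: nat
  assumes rho2: "2 \<le> rho m" and i: "i < rho m"
begin

lemma pr_pos: "0 < pr m i"
  using pr_props(2)[OF i] by simp

lemma multiples_le_kk: "2 * rho m * pr m i \<le> kk m"
proof -
  have "2 * pr m i \<le> 6 * m - 1" using pr_props(3)[OF i] by linarith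
  then have "rho m * (2 * pr m i) \<le> rho m * (6 * m - 1)" by (rule mult_left_mono) simp
  then show ?thesis unfolding kk_def by (simp add: ac_simps)
qed

lemma pr_lt_kk: "pr m i < kk m"
proof -
  have "4 * pr m i \<le> 2 * rho m * pr m i" using rho2 by simp
  then show ?thesis using multiples_le_kk pr_pos by linarith
qed

lemma xseq_above:
  "kk m \<le> t \<Longrightarrow> xseq m i t = step1 ((\<Sum>j\<in>{1..kk m}. abar m j * xseq m i (t - j)) - theta_bar m)"
  unfolding xseq_def by (rule thr_seq_above)

lemma vseq_above:
  "kk m \<le> t \<Longrightarrow> vseq m i t = step1 ((\<Sum>j\<in>{1..kk m}. abar m j * vseq m i (t - j)) - theta_bar m)"
  unfolding vseq_def by (rule thr_seq_above)

text \<open>Below \<open>k\<close>, \<open>x\<close> is the indicator of the residue class of \<open>k\<close> modulo \<open>p_i\<close>: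
  \<open>beta + l p_i\<close> (\<open>l < mu\<close>) runs through exactly these points of \<open>[0, k)\<close>.\<close>
lemma xseq_below:
  assumes "n < kk m"
  shows "xseq m i n = (if [n = kk m] (mod pr m i) then 1 else 0)"
proof -
  let ?p = "pr m i"
  have beta: "beta m i = kk m mod ?p"
    unfolding beta_def mu_def by (simp add: minus_mult_div_eq_mod)
  have "(\<exists>l. l < mu m i \<and> n = beta m i + l * ?p) \<longleftrightarrow> n mod ?p = kk m mod ?p"
  proof
    assume "\<exists>l. l < mu m i \<and> n = beta m i + l * ?p"
    then show "n mod ?p = kk m mod ?p" unfolding beta by auto
  next
    assume h: "n mod ?p = kk m mod ?p"
    have n: "n = beta m i + (n div ?p) * ?p" unfolding beta h[symmetric] by (simp add: mod_div_mult_eq)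
    have k: "kk m = beta m i + mu m i * ?p" unfolding beta mu_def by (simp add: mod_div_mult_eq)
    have "(n div ?p) * ?p < mu m i * ?p" using assms n k by linarith
    then have "n div ?p < mu m i" by simp
    then show "\<exists>l. l < mu m i \<and> n = beta m i + l * ?p" using n by blast
  qed
  then show ?thesis
    using assms unfolding xseq_def by (simp add: thr_seq_below x_init_def cong_def)
qed

lemma abar_sum_multiples_above:
  "(\<Sum>j\<in>{j\<in>{1..kk m}. q * pr m i < j \<and> pr m i dvd j}. abar m j) = (\<Sum>l\<in>{q+1..2 * rho m}. wl m l)"
proof -
  let ?p = "pr m i"
  have "(\<Sum>j\<in>{j\<in>{1..kk m}. q * ?p < j \<and> ?p dvd j}. abar m j)
      = (\<Sum>j\<in>(\<lambda>l. l * ?p) ` {q+1..2 * rho m}. abar m j)"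
  proof (rule sum.mono_neutral_right)
    show "(\<lambda>l. l * ?p) ` {q+1..2 * rho m} \<subseteq> {j\<in>{1..kk m}. q * ?p < j \<and> ?p dvd j}"
    proof
      fix j assume "j \<in> (\<lambda>l. l * ?p) ` {q+1..2 * rho m}"
      then obtain l where l: "q + 1 \<le> l" "l \<le> 2 * rho m" "j = l * ?p" by auto
      have "l * ?p \<le> 2 * rho m * ?p" using l by simp
      then have "l * ?p \<le> kk m" using multiples_le_kk by linarith
      then show "j \<in> {j\<in>{1..kk m}. q * ?p < j \<and> ?p dvd j}"
        using l pr_pos by auto
    qed
    show "\<forall>j\<in>{j\<in>{1..kk m}. q * ?p < j \<and> ?p dvd j} - (\<lambda>l. l * ?p) ` {q+1..2 * rho m}. abar m j = 0"
    proof (rule ballI, rule ccontr)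
      fix j assume j: "j \<in> {j\<in>{1..kk m}. q * ?p < j \<and> ?p dvd j} - (\<lambda>l. l * ?p) ` {q+1..2 * rho m}"
        and "abar m j \<noteq> 0"
      then obtain l where l: "1 \<le> l" "l \<le> 2 * rho m" "j = l * ?p"
        using abar_support_dvd[OF i] by blast
      then have "q < l" using j by simp
      then show False using j l by auto
    qed
  qed simp
  also have "\<dots> = (\<Sum>l\<in>{q+1..2 * rho m}. abar m (l * ?p))"
    using pr_pos by (simp add: sum.reindex inj_on_def)
  also have "\<dots> = (\<Sum>l\<in>{q+1..2 * rho m}. wl m l)"
    by (rule sum.cong) (auto intro: abar_at[OF i])
  finally show ?thesis .
qed

text \<open>At time \<open>k\<close> the window of \<open>x\<close> hits exactly the multiples of \<open>p_i\<close>, whose weights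
  add up to \<open>theta\<close>; so the threshold is reached.\<close>
lemma xseq_at_kk: "xseq m i (kk m) = 1"
proof -
  let ?p = "pr m i" and ?k = "kk m"
  have "(\<Sum>j\<in>{1..?k}. abar m j * xseq m i (?k - j)) = (\<Sum>j\<in>{1..?k}. if ?p dvd j then abar m j else 0)"
  proof (rule sum.cong)
    fix j assume j: "j \<in> {1..?k}"
    then have "[?k - j = ?k] (mod ?p) \<longleftrightarrow> ?p dvd j"
      by (auto simp: cong_sym_eq[of "?k - j"] cong_altdef_nat)
    then show "abar m j * xseq m i (?k - j) = (if ?p dvd j then abar m j else 0)"
      using j by (simp add: xseq_below)
  qed simp
  also have "\<dots> = (\<Sum>j\<in>{j\<in>{1..?k}. 0 * ?p < j \<and> ?p dvd j}. abar m j)"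
    by (subst sum.inter_filter) auto
  also have "\<dots> = theta_bar m"
    using abar_sum_multiples_above[of 0] wl_sum_total[OF rho2] by (simp add: theta_bar_def)
  finally show ?thesis by (simp add: xseq_above step1_def)
qed

lemma vseq_below:
  assumes "n + 2 \<le> kk m"
  shows "vseq m i n = (if [n + 1 = kk m] (mod pr m i) then 1 else 0)"
  using assms by (simp add: vseq_def thr_seq_below v_init_def xseq_below)

lemma vseq_kk_minus_1: "vseq m i (kk m - 1) = 0"
  using pr_lt_kk by (simp add: vseq_def thr_seq_below v_init_def xseq_at_kk)

text \<open>Shape of the window of \<open>v\<close> at a time \<open>t \<ge> k\<close>, provided \<open>v\<close> vanishes on \<open>[k, t)\<close>:
  with \<open>d = t + 1 - k\<close>, the lag \<open>j\<close> sees a one iff \<open>j > d\<close> and \<open>j \<equiv> d (mod p_i)\<close>.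
  Lags \<open>j < d\<close> land in \<open>[k, t)\<close>, the lag \<open>d\<close> lands on \<open>k - 1\<close>, and larger lags land
  below \<open>k - 1\<close>, where \<open>v\<close> is the shifted residue-class indicator.\<close>
lemma vseq_window:
  assumes t: "kk m \<le> t" and zero_before: "\<And>s. kk m \<le> s \<Longrightarrow> s < t \<Longrightarrow> vseq m i s = 0"
    and j: "j \<in> {1..kk m}"
  shows "vseq m i (t - j) = (if t + 1 - kk m < j \<and> [j = t + 1 - kk m] (mod pr m i) then 1 else 0)"
proof -
  define d where "d = t + 1 - kk m"
  consider "j < d" | "j = d" | "d < j" by linarith
  then show ?thesis
  proof cases
    case 1
    then show ?thesis using zero_before[of "t - j"] j unfolding d_def by auto
  next
    case 2
    then have "t - j = kk m - 1" unfolding d_def using t by simp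
    then show ?thesis using 2 vseq_kk_minus_1 unfolding d_def by simp
  next
    case 3
    define n where "n = t - j"
    have n2: "n + 2 \<le> kk m" and shift: "kk m = (n + 1) + (j - d)"
      using 3 t j unfolding n_def d_def by auto
    have "[n + 1 = kk m] (mod pr m i) \<longleftrightarrow> [j = d] (mod pr m i)"
      using 3 cong_add_lcancel_nat[of "n + 1" 0 "j - d" "pr m i"]
      by (simp add: shift cong_sym_eq[of 0] cong_diff_iff_cong_0_nat)
    then show ?thesis using vseq_below[OF n2] 3 unfolding n_def d_def by simp
  qed
qed

text \<open>The key estimate: if \<open>v\<close> vanishes on \<open>[k, t)\<close>, the window sum at \<open>t\<close> stays at
  least 2 below the threshold.  If \<open>p_i\<close> divides \<open>d\<close>, the window picks up a proper tail
  of the profile at the multiples of \<open>p_i\<close>; otherwise it picks up a residue class avoiding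
  them.\<close>
lemma window_sum_bound:
  assumes t: "kk m \<le> t" and zero_before: "\<And>s. kk m \<le> s \<Longrightarrow> s < t \<Longrightarrow> vseq m i s = 0"
  shows "(\<Sum>j\<in>{1..kk m}. abar m j * vseq m i (t - j)) \<le> theta_bar m - 2"
proof -
  let ?p = "pr m i"
  define d where "d = t + 1 - kk m"
  define J where "J = {j\<in>{1..kk m}. d < j \<and> [j = d] (mod ?p)}"
  have window: "(\<Sum>j\<in>{1..kk m}. abar m j * vseq m i (t - j)) = (\<Sum>j\<in>J. abar m j)"
    unfolding J_def
    by (subst sum.inter_filter) (auto simp: vseq_window[OF t zero_before] d_def intro!: sum.cong)
  have "(\<Sum>j\<in>J. abar m j) \<le> 2 * int (rho m) - 2"
  proof (cases "?p dvd d")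
    case True
    then obtain q where q: "d = q * ?p" by (auto simp: dvd_def mult.commute)
    have "1 \<le> q" using q t unfolding d_def by (cases q) auto
    have J_mult: "J = {j\<in>{1..kk m}. q * ?p < j \<and> ?p dvd j}"
      unfolding J_def q by (auto simp: cong_def dvd_eq_mod_eq_0)
    have "(\<Sum>j\<in>J. abar m j) = (\<Sum>l\<in>{q+1..2 * rho m}. wl m l)"
      unfolding J_mult by (rule abar_sum_multiples_above)
    also have "\<dots> \<le> 2 * int (rho m) - 2" using wl_tail_bound[OF rho2 \<open>1 \<le> q\<close>] .
    finally show ?thesis .
  next
    case False
    show ?thesis by (rule abar_sum_class_bound[OF i _ _ False]) (auto simp: J_def)
  qed
  then show ?thesis using window unfolding theta_bar_def by simp
qed

lemma vseq_zero_from_kk: "kk m \<le> t \<Longrightarrow> vseq m i t = 0"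
proof (induction t rule: less_induct)
  case (less t)
  have "(\<Sum>j\<in>{1..kk m}. abar m j * vseq m i (t - j)) \<le> theta_bar m - 2"
    by (rule window_sum_bound) (use less in auto)
  then show ?case using less.prems by (simp add: vseq_above step1_def)
qed

text \<open>In fact \<open>v\<close> vanishes from \<open>k - p_i\<close> on: below \<open>k - 1\<close> the points \<open>n\<close> with
  \<open>n + 1 \<equiv> k\<close> stop at \<open>k - p_i - 1\<close>.\<close>
lemma vseq_zero_from: "kk m - pr m i \<le> n \<Longrightarrow> vseq m i n = 0"
proof -
  assume n: "kk m - pr m i \<le> n"
  consider "kk m \<le> n" | "n = kk m - 1" | "n + 2 \<le> kk m" by linarith
  then show ?thesis
  proof cases
    case 1
    then show ?thesis by (rule vseq_zero_from_kk)
  next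
    case 2
    then show ?thesis using vseq_kk_minus_1 by simp
  next
    case 3
    have "0 < kk m - (n + 1)" "kk m - (n + 1) < pr m i" using 3 n pr_lt_kk by linarith+
    then have "\<not> pr m i dvd kk m - (n + 1)" by (auto dest: dvd_imp_le)
    then have "\<not> [kk m = n + 1] (mod pr m i)" using 3 by (subst cong_altdef_nat) auto
    then have "\<not> [n + 1 = kk m] (mod pr m i)" by (metis cong_sym)
    then show ?thesis using vseq_below[OF 3] by simp
  qed
qed

lemma vseq_last_one: "vseq m i (kk m - pr m i - 1) = 1"
proof -
  have n2: "kk m - pr m i - 1 + 2 \<le> kk m" and n1: "kk m - pr m i - 1 + 1 = kk m - pr m i"
    using pr_lt_kk pr_pos by linarith+
  have "[kk m - pr m i = kk m] (mod pr m i)"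
    using pr_lt_kk by (simp add: cong_def le_mod_geq)
  then show ?thesis using vseq_below[OF n2] n1 by simp
qed

end

theorem lemma10:
  fixes m i :: nat
  assumes "m > 0" and "rho m \<ge> 2" and "i < rho m"
  shows "(\<forall>t\<ge>kk m. vseq m i t = 0)
       \<and> (\<forall>t\<ge>kk m. (\<Sum>j\<in>{1..kk m}. abar m j * vseq m i (t - j)) \<le> theta_bar m - 2)
       \<and> eventually_periodic (vseq m i)
       \<and> transient_length (vseq m i) = kk m - pr m i
       \<and> cycle_length (vseq m i) = 1"
proof -
  have zero: "\<forall>t\<ge>kk m. vseq m i t = 0"
    using vseq_zero_from_kk[OF assms(2,3)] by blast
  have window: "\<forall>t\<ge>kk m. (\<Sum>j\<in>{1..kk m}. abar m j * vseq m i (t - j)) \<le> theta_bar m - 2"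
    using window_sum_bound[OF assms(2,3)] vseq_zero_from_kk[OF assms(2,3)] by blast
  have "eventually_periodic (vseq m i) \<and> transient_length (vseq m i) = kk m - pr m i
      \<and> cycle_length (vseq m i) = 1"
  proof (rule constant_tail_lengths)
    show "\<And>n. kk m - pr m i \<le> n \<Longrightarrow> vseq m i n = 0" by (rule vseq_zero_from[OF assms(2,3)])
    show "0 < kk m - pr m i" using pr_lt_kk[OF assms(2,3)] by simp
    show "vseq m i (kk m - pr m i - 1) \<noteq> 0" using vseq_last_one[OF assms(2,3)] by simp
  qed
  with zero window show ?thesis by blast
qed

end
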